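(* Let $m\ge 2$ be an integer such that $p_1(x)=x^{m+2}+x+1$ is irreducible over $\mathrm{GF}(2)$, and let $F=\mathrm{GF}(2^{m+2})=\mathrm{GF}(2)[x]/(p_1(x))$, whose elements are identified with the polynomials over $\mathrm{GF}(2)$ of degree at most $m+1$. Let $D_0$ be the multiplication table of $F$ (rows and columns indexed by the elements of $F$, entry in row $a$ and column $b$ equal to $ab$ computed in $F$). Let $D_1$ be the $2^{m+2}\times 4$ submatrix of $D_0$ consisting of the columns indexed by $0,1,x,x+1$, and let $D_2$ be the submatrix of $D_1$ consisting of the $2^m$ rows indexed by the elements of $r_{m-2}\cup\big(x^{m+1}+x^m+x^{m-1}+r_{m-2}\big)$. Then: (i) $D_1$ is a difference matrix $D(2^{m+2},2^2,2^{m+2})$ over the additive group of $F$; (ii) $\phi(D_2)$ is a difference matrix $D(2^m,2^2,2^m)$ over the additive group of $\mathrm{GF}(2^m)$.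
   Context: $r_{m-2}$ denotes the set of all polynomials over $\mathrm{GF}(2)$ of degree at most $m-2$, and $q+S=\{q+s:s\in S\}$. A difference matrix $D(b,c,g)$ over a finite abelian group $\mathcal{A}$ of order $g$ is a $b\times c$ array with entries in $\mathcal{A}$ such that, for any two distinct columns, their entrywise difference vector contains every element of $\mathcal{A}$ equally often. Elements of $\mathrm{GF}(2^m)$ are identified (as an additive group) with polynomials over $\mathrm{GF}(2)$ of degree at most $m-1$. The truncation projection $\phi$ maps $a_0+a_1x+\cdots+a_{m+1}x^{m+1}\in F$ to $a_0+a_1x+\cdots+a_{m-1}x^{m-1}$; for an array $D$, $\phi(D)$ is obtained by applying $\phi$ entrywise. *)

theory Defs
  imports "HOL-Library.Z2" "HOL-Computational_Algebra.Polynomial"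
    "HOL-Computational_Algebra.Polynomial_Factorial"
begin

definition p1 :: "nat \<Rightarrow> bit poly" where
  "p1 m = monom 1 (m + 2) + [:0, 1:] + 1"

text \<open>Additive group of GF(2^n): polynomials over GF(2) of degree at most n-1
  (for n \<ge> 1; the zero polynomial has degree 0).\<close>
definition gf_elems :: "nat \<Rightarrow> bit poly set" where
  "gf_elems n = {q. degree q < n}"

definition r_set :: "nat \<Rightarrow> bit poly set" where
  "r_set k = {q. degree q \<le> k}"

definition phi :: "nat \<Rightarrow> bit poly \<Rightarrow> bit poly" where
  "phi m p = (\<Sum>i<m. monom (coeff p i) i)"

definition diff_matrix ::
  "nat \<Rightarrow> nat \<Rightarrow> nat \<Rightarrow> 'g::ab_group_add set \<Rightarrow> 'r set \<Rightarrow> 'c set \<Rightarrow> ('r \<Rightarrow> 'c \<Rightarrow> 'g) \<Rightarrow> bool"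
  where
  "diff_matrix b c g G R C D \<longleftrightarrow>
     finite R \<and> finite C \<and> finite G \<and> card R = b \<and> card C = c \<and> card G = g \<and>
     (\<forall>r\<in>R. \<forall>j\<in>C. D r j \<in> G) \<and>
     (\<forall>j\<in>C. \<forall>k\<in>C. j \<noteq> k \<longrightarrow>
        (\<forall>u\<in>G. \<forall>v\<in>G. card {r\<in>R. D r j - D r k = u} = card {r\<in>R. D r j - D r k = v}))"

end

theory Submission
  imports Defs
begin

text \<open>Multiplication by a nonzero element of a field is a bijection, so for distinct columns
  j, k of the multiplication table of F the difference column r \<mapsto> r (j - k) takes every
  value exactly once. For the truncated table, the row set R = r_(m-2) \<union> (h + r_(m-2)) with
  h = x^(m+1) + x^m + x^(m-1) is an additive group of order 2^m (as h + h = 0), and the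
  difference column r \<mapsto> \<phi>(r c), c = j - k \<in> {1, x, x + 1}, is additive; so it suffices that its
  kernel on R is trivial. For s \<in> r_(m-2) the product s c has degree < m and survives reduction
  and truncation unchanged, while \<phi>(h c) can be computed explicitly and is never of the form s c.\<close>

lemma bit_add_self [simp]: "(b :: bit) + b = 0"
  by (cases b) simp_all

lemma bit_poly_add_self [simp]: "(q :: bit poly) + q = 0"
  by (rule poly_eqI) (simp only: coeff_add bit_add_self coeff_0)

lemma bit_poly_add_self_left [simp]: "(q :: bit poly) + (q + r) = r"
  by (simp add: add.assoc[symmetric])

lemma bit_poly_diff_eq_add: "(a :: bit poly) - b = a + b"
  by (simp add: poly_eq_iff)

lemma UNIV_bit: "(UNIV :: bit set) = {0, 1}"
  by (auto intro: bit.exhaust)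

lemma finite_UNIV_bit: "finite (UNIV :: bit set)"
  unfolding UNIV_bit by simp

lemma card_UNIV_bit: "card (UNIV :: bit set) = 2"
  unfolding UNIV_bit by simp

lemma degree_less_Suc_eq_pCons_image:
  assumes "n \<ge> 1"
  shows "{q :: 'a::zero poly. degree q < Suc n} = (\<lambda>(a, q). pCons a q) ` (UNIV \<times> {q. degree q < n})"
proof (intro set_eqI iffI)
  fix x :: "'a poly"
  assume x: "x \<in> {q. degree q < Suc n}"
  obtain a q where xq: "x = pCons a q"
    by (cases x)
  have "degree q < n"
    using assms x xq by (cases "q = 0") auto
  then show "x \<in> (\<lambda>(a, q). pCons a q) ` (UNIV \<times> {q. degree q < n})"
    using xq by auto
next
  fix x :: "'a poly"
  assume "x \<in> (\<lambda>(a, q). pCons a q) ` (UNIV \<times> {q. degree q < n})"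
  then obtain a q where "x = pCons a q" "degree q < n"
    by auto
  then show "x \<in> {q. degree q < Suc n}"
    by (cases "q = 0") auto
qed

lemma card_degree_less:
  assumes "finite (UNIV :: 'a::zero set)" "n \<ge> 1"
  shows "card {q :: 'a poly. degree q < n} = card (UNIV :: 'a set) ^ n"
  using assms(2)
proof (induction n rule: nat_induct_at_least)
  case base
  have "{q :: 'a poly. degree q < 1} = range (\<lambda>a. [:a:])"
    by (auto elim!: degree_eq_zeroE)
  moreover have "inj (\<lambda>a :: 'a. [:a:])"
    by (auto intro: injI)
  ultimately show ?case
    by (simp add: card_image)
next
  case (Suc n)
  have "inj_on (\<lambda>(a, q). pCons a q) (UNIV \<times> {q :: 'a poly. degree q < n})"
    by (auto intro: inj_onI)
  then have "card {q :: 'a poly. degree q < Suc n} = card ((UNIV :: 'a set) \<times> {q :: 'a poly. degree q < n})"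
    by (simp only: degree_less_Suc_eq_pCons_image[OF Suc.hyps(1)] card_image)
  then show ?case
    using Suc.IH by (simp add: card_cartesian_product)
qed

lemma card_gf_elems: "n \<ge> 1 \<Longrightarrow> card (gf_elems n) = 2 ^ n"
  unfolding gf_elems_def using card_degree_less[OF finite_UNIV_bit, of n] by (simp add: card_UNIV_bit)

lemma finite_gf_elems: "n \<ge> 1 \<Longrightarrow> finite (gf_elems n)"
  using card_gf_elems[of n] by (intro card_ge_0_finite) simp

lemma gf_elems_diff: "x \<in> gf_elems n \<Longrightarrow> y \<in> gf_elems n \<Longrightarrow> x - y \<in> gf_elems n"
  unfolding gf_elems_def using degree_diff_le_max[of x y] by auto

lemma gf_elems_2: "gf_elems 2 = {0, 1, [:0, 1:], [:1, 1:]}"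
proof (intro set_eqI iffI)
  fix q
  assume "q \<in> gf_elems 2"
  then have "q = [:coeff q 0, coeff q 1:]"
    by (auto simp: gf_elems_def poly_eq_iff coeff_pCons coeff_eq_0 split: nat.split)
  then show "q \<in> {0, 1, [:0, 1:], [:1, 1:]}"
    by (cases "coeff q 0"; cases "coeff q 1") (simp_all add: one_pCons)
qed (auto simp: gf_elems_def one_pCons)

lemma coeff_phi: "coeff (phi m q) n = (if n < m then coeff q n else 0)"
  unfolding phi_def by (simp add: coeff_sum coeff_monom)

lemma phi_add: "phi m (a + b) = phi m a + phi m b"
  by (simp add: poly_eq_iff coeff_phi)

lemma phi_diff: "phi m (a - b) = phi m a - phi m b"
  by (simp add: poly_eq_iff coeff_phi)

lemma phi_mod_diff: "phi m (x mod p) - phi m (y mod p) = phi m ((x - y) mod (p :: bit poly))"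
  by (simp add: poly_mod_diff_left phi_diff)

lemma phi_eq_self: "degree q < m \<Longrightarrow> phi m q = q"
  by (auto simp: poly_eq_iff coeff_phi coeff_eq_0)

lemma phi_monom_eq_0: "m \<le> k \<Longrightarrow> phi m (monom c k) = 0"
  by (auto simp: poly_eq_iff coeff_phi coeff_monom)

lemma degree_phi_less:
  assumes "m \<ge> 1"
  shows "degree (phi m q) < m"
proof -
  have "degree (phi m q) \<le> m - 1"
    by (rule degree_le) (auto simp: coeff_phi)
  then show ?thesis
    using assms by linarith
qed

lemma card_fibre_eq_1:
  assumes "finite G" "card R = card G" "inj_on f R" "f ` R \<subseteq> G" "u \<in> G"
  shows "card {r \<in> R. f r = u} = 1"
proof -
  have "f ` R = G"
    using assms by (metis card_image card_subset_eq)
  then obtain r where r: "r \<in> R" "f r = u"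
    using assms(5) by blast
  then have "{r \<in> R. f r = u} = {r}"
    using assms(3) by (auto dest: inj_onD)
  then show ?thesis
    by simp
qed

lemma diff_matrixI:
  fixes D :: "'r \<Rightarrow> 'c \<Rightarrow> 'g::ab_group_add"
  assumes "finite R" "finite C" "finite G" "card R = b" "card C = c" "card G = b"
    and "\<And>r j. r \<in> R \<Longrightarrow> j \<in> C \<Longrightarrow> D r j \<in> G"
    and "\<And>x y. x \<in> G \<Longrightarrow> y \<in> G \<Longrightarrow> x - y \<in> G"
    and "\<And>j k. j \<in> C \<Longrightarrow> k \<in> C \<Longrightarrow> j \<noteq> k \<Longrightarrow> inj_on (\<lambda>r. D r j - D r k) R"
  shows "diff_matrix b c b G R C D"
  unfolding diff_matrix_def
proof (intro conjI ballI impI assms(1-6))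
  fix j k u v
  assume jk: "j \<in> C" "k \<in> C" "j \<noteq> k" and uv: "u \<in> G" "v \<in> G"
  have "(\<lambda>r. D r j - D r k) ` R \<subseteq> G"
    using assms(7,8) jk by auto
  then show "card {r \<in> R. D r j - D r k = u} = card {r \<in> R. D r j - D r k = v}"
    using card_fibre_eq_1[OF assms(3) _ assms(9)[OF jk]] assms(4,6) uv by simp
qed (use assms(7) in simp)

lemma inj_on_additive:
  fixes f :: "'a::ab_group_add \<Rightarrow> 'b::ab_group_add"
  assumes "\<And>a b. a \<in> R \<Longrightarrow> b \<in> R \<Longrightarrow> a - b \<in> R"
    and "\<And>a b. f (a - b) = f a - f b"
    and "\<And>a. a \<in> R \<Longrightarrow> f a = 0 \<Longrightarrow> a = 0"
  shows "inj_on f R"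
proof (rule inj_onI)
  fix a b
  assume "a \<in> R" "b \<in> R" "f a = f b"
  then show "a = b"
    using assms by (metis eq_iff_diff_eq_0)
qed

lemma inj_on_mult_mod:
  fixes p c :: "'a::field poly"
  assumes "prime_elem p" "c \<noteq> 0" "degree c < degree p"
  shows "inj_on (\<lambda>r. (r * c) mod p) {r. degree r < degree p}"
proof (rule inj_onI)
  fix a b
  assume deg: "a \<in> {r. degree r < degree p}" "b \<in> {r. degree r < degree p}"
    and "(a * c) mod p = (b * c) mod p"
  then have "p dvd (a - b) * c"
    by (simp add: mod_eq_dvd_iff left_diff_distrib)
  moreover have "\<not> p dvd c"
    using dvd_imp_degree_le[of p c] assms(2,3) by auto
  ultimately have "p dvd a - b"
    using assms(1) prime_elem_dvd_mult_iff by blast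
  moreover have "degree (a - b) < degree p"
    using deg degree_diff_le_max[of a b] by auto
  ultimately show "a = b"
    using dvd_imp_degree_le[of p "a - b"] by auto
qed

lemma irreducible_imp_degree_pos:
  fixes p :: "'a::field poly"
  shows "irreducible p \<Longrightarrow> degree p > 0"
  by (metis irreducible_def is_unit_iff_degree neq0_conv)

lemma mult_table_diff_matrix:
  fixes p :: "bit poly"
  assumes p: "irreducible p" and C: "C \<subseteq> gf_elems (degree p)"
  shows "diff_matrix (2 ^ degree p) (card C) (2 ^ degree p)
           (gf_elems (degree p)) (gf_elems (degree p)) C (\<lambda>a b. (a * b) mod p)"
proof -
  have deg: "degree p \<ge> 1"
    using irreducible_imp_degree_pos[OF p] by simp
  then have fin: "finite (gf_elems (degree p))"
    by (rule finite_gf_elems)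
  have p0: "p \<noteq> 0"
    using deg by auto
  show ?thesis
  proof (rule diff_matrixI)
    show "finite C"
      using C fin by (rule finite_subset)
    show "(r * j) mod p \<in> gf_elems (degree p)" for r j
      using deg degree_mod_less'[OF p0, of "r * j"]
      by (cases "(r * j) mod p = 0") (auto simp: gf_elems_def)
    fix j k
    assume jk: "j \<in> C" "k \<in> C" "j \<noteq> k"
    have "degree (j - k) < degree p"
      using jk C gf_elems_diff unfolding gf_elems_def by blast
    then have "inj_on (\<lambda>r. (r * (j - k)) mod p) (gf_elems (degree p))"
      unfolding gf_elems_def
      using inj_on_mult_mod[OF field_poly_irreducible_imp_prime[OF p]] jk(3) by simp
    then show "inj_on (\<lambda>r. (r * j) mod p - (r * k) mod p) (gf_elems (degree p))"
      by (simp only: right_diff_distrib poly_mod_diff_left)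
  qed (use fin card_gf_elems[OF deg] gf_elems_diff in blast)+
qed

lemma union_translate_add_closed:
  fixes h :: "bit poly"
  assumes "\<And>a b. a \<in> S \<Longrightarrow> b \<in> S \<Longrightarrow> a + b \<in> S"
    and "a \<in> S \<union> (+) h ` S" "b \<in> S \<union> (+) h ` S"
  shows "a + b \<in> S \<union> (+) h ` S"
  using assms by (auto simp: add_ac)

lemma card_union_translate:
  fixes h :: "bit poly"
  assumes "finite S" "\<And>s. s \<in> S \<Longrightarrow> coeff s d = 0" "coeff h d \<noteq> 0"
  shows "card (S \<union> (+) h ` S) = 2 * card S"
proof -
  have "h + s \<notin> S" if "s \<in> S" for s
    using assms(2,3) that by (metis add.right_neutral coeff_add)
  then have "S \<inter> (+) h ` S = {}"
    by blast
  moreover have "inj_on ((+) h) S"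
    by (auto intro: inj_onI)
  ultimately show ?thesis
    using assms(1) by (simp add: card_Un_disjoint card_image)
qed

lemma degree_p1 [simp]: "degree (p1 m) = m + 2"
proof -
  have "degree ([:0, 1:] + 1 :: bit poly) < degree (monom (1 :: bit) (m + 2))"
    by (simp add: degree_monom_eq one_pCons)
  then show ?thesis
    unfolding p1_def by (simp add: degree_add_eq_left degree_monom_eq add.assoc)
qed

lemma mod_p1_eq_self: "degree q < m + 2 \<Longrightarrow> q mod p1 m = q"
  by (simp add: mod_poly_less)

lemma phi_mult_mod_p1_small:
  "degree s + degree c < m \<Longrightarrow> phi m ((s * c) mod p1 m) = s * c"
  using degree_mult_le[of s c] by (simp add: mod_p1_eq_self phi_eq_self)

definition coset_leader :: "nat \<Rightarrow> bit poly" where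
  "coset_leader m = monom 1 (m + 1) + monom 1 m + monom 1 (m - 1)"

lemma coset_leader_times_x:
  assumes "m \<ge> 1"
  shows "coset_leader m * [:0, 1:] = p1 m + (monom 1 (m + 1) + monom 1 m + [:1, 1:])"
proof -
  have x: "[:0, 1 :: bit:] = monom 1 1"
    by (simp add: monom_Suc)
  have "coset_leader m * [:0, 1:] = monom 1 (m + 2) + monom 1 (m + 1) + monom 1 m"
    using assms by (simp add: coset_leader_def x distrib_right mult_monom)
  also have "\<dots> = p1 m + (monom 1 (m + 1) + monom 1 m + ([:0, 1:] + 1))"
    by (simp add: p1_def add_ac)
  finally show ?thesis
    by (simp add: one_pCons)
qed

lemma phi_coset_leader_mult_mod_p1:
  assumes "m \<ge> 2"
  shows "phi m ((coset_leader m * 1) mod p1 m) = monom 1 (m - 1)"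
    and "phi m ((coset_leader m * [:0, 1:]) mod p1 m) = [:1, 1:]"
    and "phi m ((coset_leader m * [:1, 1:]) mod p1 m) = [:1, 1:] + monom 1 (m - 1)"
proof -
  have "degree (coset_leader m) < m + 2"
    unfolding coset_leader_def by (rule degree_lessI) (auto simp: coeff_monom)
  then have leader: "coset_leader m mod p1 m = coset_leader m"
    by (rule mod_p1_eq_self)
  have "degree (monom 1 (m + 1) + monom 1 m + [:1, 1 :: bit:]) < m + 2"
    using assms by (intro degree_lessI) (auto simp: coeff_monom coeff_pCons split: nat.split)
  then have times_x: "(coset_leader m * [:0, 1:]) mod p1 m = monom 1 (m + 1) + monom 1 m + [:1, 1:]"
    using assms by (simp only: coset_leader_times_x mod_add_self1 mod_p1_eq_self)
  show one: "phi m ((coset_leader m * 1) mod p1 m) = monom 1 (m - 1)"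
    using assms by (simp add: leader)
      (simp add: coset_leader_def phi_add phi_monom_eq_0 phi_eq_self degree_monom_eq)
  show x: "phi m ((coset_leader m * [:0, 1:]) mod p1 m) = [:1, 1:]"
    unfolding times_x using assms by (simp add: phi_add phi_monom_eq_0 phi_eq_self)
  have "coset_leader m * [:1, 1:] = coset_leader m * [:0, 1:] + coset_leader m * 1"
    by (simp add: one_pCons distrib_left)
  then show "phi m ((coset_leader m * [:1, 1:]) mod p1 m) = [:1, 1:] + monom 1 (m - 1)"
    using one x by (simp only: poly_mod_add_left phi_add)
qed

lemma coset_leader_residue_ne_small_product:
  assumes "m \<ge> 2" "c \<in> {1, [:0, 1:], [:1, 1:]}" "degree s \<le> m - 2"
  shows "phi m ((coset_leader m * c) mod p1 m) + s * c \<noteq> 0"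
proof -
  note leader = phi_coset_leader_mult_mod_p1[OF assms(1)]
  from assms(2) consider "c = 1" | "c = [:0, 1:]" | "c = [:1, 1:]"
    by blast
  then show ?thesis
  proof cases
    case 1
    have "coeff s (m - 1) = 0"
      using assms(1,3) by (intro coeff_eq_0) linarith
    then have "coeff (monom 1 (m - 1) + s * 1) (m - 1) = 1"
      by simp
    then show ?thesis
      unfolding 1 leader(1) by (metis coeff_0 zero_neq_one)
  next
    case 2
    have "coeff ([:1, 1:] + s * [:0, 1:]) 0 = 1"
      by simp
    then show ?thesis
      unfolding 2 leader(2) by (metis coeff_0 zero_neq_one)
  next
    case 3
    have "poly ([:1, 1:] + monom 1 (m - 1) + s * [:1, 1:]) 1 = 1"
      by (simp add: poly_monom)
    then show ?thesis
      unfolding 3 leader(3) by (metis poly_0 zero_neq_one)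
  qed
qed

lemma phi_mult_mod_p1_eq_0_imp_eq_0:
  assumes "m \<ge> 2" "c \<in> {1, [:0, 1:], [:1, 1:]}"
    and "a \<in> r_set (m - 2) \<union> (+) (coset_leader m) ` r_set (m - 2)"
    and "phi m ((a * c) mod p1 m) = 0"
  shows "a = 0"
proof -
  obtain s where s: "degree s \<le> m - 2" and a: "a = s \<or> a = coset_leader m + s"
    using assms(3) by (auto simp: r_set_def)
  have c: "degree c \<le> 1" "c \<noteq> 0"
    using assms(2) by (auto simp: one_pCons)
  have small: "phi m ((s * c) mod p1 m) = s * c"
    using s c(1) assms(1) by (intro phi_mult_mod_p1_small) linarith
  from a show ?thesis
  proof
    assume "a = s"
    then show ?thesis
      using assms(4) small c(2) by simp
  next
    assume "a = coset_leader m + s"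
    then have "phi m ((coset_leader m * c) mod p1 m) + s * c = 0"
      using assms(4) small by (simp only: distrib_right poly_mod_add_left phi_add)
    then show ?thesis
      using coset_leader_residue_ne_small_product[OF assms(1,2) s] by contradiction
  qed
qed

lemma truncated_table_diff_matrix:
  assumes "m \<ge> 2"
  shows "diff_matrix (2 ^ m) (2 ^ 2) (2 ^ m) (gf_elems m)
           (r_set (m - 2) \<union> (+) (coset_leader m) ` r_set (m - 2)) (gf_elems 2)
           (\<lambda>a b. phi m ((a * b) mod p1 m))"
proof -
  define R where "R = r_set (m - 2) \<union> (+) (coset_leader m) ` r_set (m - 2)"
  have S: "r_set (m - 2) = gf_elems (m - 1)"
    using assms by (auto simp: r_set_def gf_elems_def)
  have "card R = 2 * card (gf_elems (m - 1))"
    unfolding R_def S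
  proof (rule card_union_translate[where d = "m + 1"])
    show "finite (gf_elems (m - 1))"
      using assms by (intro finite_gf_elems) simp
    show "coeff s (m + 1) = 0" if "s \<in> gf_elems (m - 1)" for s
      using that by (auto simp: gf_elems_def coeff_eq_0)
    show "coeff (coset_leader m) (m + 1) \<noteq> 0"
      using assms by (simp add: coset_leader_def coeff_monom)
  qed
  also have "\<dots> = 2 ^ m"
    using assms card_gf_elems[of "m - 1"] by (simp add: power_eq_if)
  finally have card_R: "card R = 2 ^ m" .
  have add_closed: "a + b \<in> R" if "a \<in> R" "b \<in> R" for a b
    using that degree_add_le unfolding R_def r_set_def by (intro union_translate_add_closed) auto
  show ?thesis
    unfolding R_def[symmetric]
  proof (rule diff_matrixI)
    show "finite R"
      using card_R by (intro card_ge_0_finite) simp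
    show "phi m ((r * j) mod p1 m) \<in> gf_elems m" for r j
      using assms degree_phi_less by (simp add: gf_elems_def)
    fix j k
    assume jk: "j \<in> gf_elems 2" "k \<in> gf_elems 2" "j \<noteq> k"
    have c: "j - k \<in> {1, [:0, 1:], [:1, 1:]}"
      using gf_elems_diff[OF jk(1,2)] jk(3) unfolding gf_elems_2 by auto
    have "inj_on (\<lambda>r. phi m ((r * (j - k)) mod p1 m)) R"
    proof (rule inj_on_additive)
      show "a - b \<in> R" if "a \<in> R" "b \<in> R" for a b
        using add_closed[OF that] by (simp add: bit_poly_diff_eq_add)
      show "phi m (((a - b) * (j - k)) mod p1 m)
          = phi m ((a * (j - k)) mod p1 m) - phi m ((b * (j - k)) mod p1 m)" for a b
        by (simp add: phi_mod_diff left_diff_distrib)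
      show "a = 0" if "a \<in> R" "phi m ((a * (j - k)) mod p1 m) = 0" for a
        using phi_mult_mod_p1_eq_0_imp_eq_0[OF assms c] that unfolding R_def by blast
    qed
    then show "inj_on (\<lambda>r. phi m ((r * j) mod p1 m) - phi m ((r * k) mod p1 m)) R"
      by (simp add: phi_mod_diff right_diff_distrib)
  qed (use assms card_R card_gf_elems finite_gf_elems gf_elems_diff in simp_all)
qed

theorem theorem2:
  fixes m :: nat
  assumes "m \<ge> 2"
    and "irreducible (p1 m)"
  shows "diff_matrix (2 ^ (m + 2)) (2 ^ 2) (2 ^ (m + 2))
           (gf_elems (m + 2)) (gf_elems (m + 2)) {0, 1, [:0, 1:], [:1, 1:]}
           (\<lambda>a b. (a * b) mod p1 m) \<and>
         diff_matrix (2 ^ m) (2 ^ 2) (2 ^ m)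
           (gf_elems m)
           (r_set (m - 2) \<union> ((\<lambda>s. monom 1 (m + 1) + monom 1 m + monom 1 (m - 1) + s) ` r_set (m - 2)))
           {0, 1, [:0, 1:], [:1, 1:]}
           (\<lambda>a b. phi m ((a * b) mod p1 m))"
proof
  have "gf_elems 2 \<subseteq> gf_elems (degree (p1 m))"
    by (auto simp: gf_elems_def)
  moreover have "card (gf_elems 2) = 2 ^ 2"
    by (rule card_gf_elems) simp
  ultimately have "diff_matrix (2 ^ (m + 2)) (2 ^ 2) (2 ^ (m + 2))
      (gf_elems (m + 2)) (gf_elems (m + 2)) (gf_elems 2) (\<lambda>a b. (a * b) mod p1 m)"
    using mult_table_diff_matrix[OF assms(2), of "gf_elems 2"] by (simp only: degree_p1)
  then show "diff_matrix (2 ^ (m + 2)) (2 ^ 2) (2 ^ (m + 2))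
      (gf_elems (m + 2)) (gf_elems (m + 2)) {0, 1, [:0, 1:], [:1, 1:]} (\<lambda>a b. (a * b) mod p1 m)"
    by (simp only: gf_elems_2)
  show "diff_matrix (2 ^ m) (2 ^ 2) (2 ^ m) (gf_elems m)
      (r_set (m - 2) \<union> ((\<lambda>s. monom 1 (m + 1) + monom 1 m + monom 1 (m - 1) + s) ` r_set (m - 2)))
      {0, 1, [:0, 1:], [:1, 1:]} (\<lambda>a b. phi m ((a * b) mod p1 m))"
    using truncated_table_diff_matrix[OF assms(1)] by (simp add: gf_elems_2 coset_leader_def)
qed

end
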